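(* Let $\mathbf{a}=(a_1,\dots,a_n)$ be positive integers with sum $a$, $m\ge1$, and $\mathbf{r}=(r_1,\dots,r_m)$, $\mathbf{s}=(s_1,\dots,s_m)$ sequences of nonnegative integers with sums $r$, $s$. Let $N = n +a(r+s)+m\sum_{1\le i<j\le n} a_i a_j+ \sum_{i=1}^m r_i s_i$ and $N^- = n +a(r+s)+m\sum_{1\le i<j\le n} a_i a_j$. Then \[ |\mathrm{SB}(\mathbf{a},\mathbf{r},\mathbf{s})| = |\mathrm{SB}^-(\mathbf{a},\mathbf{r},\mathbf{s})| \frac{N!}{(N^-)!}. \]
   Context: Let $A_i=a_1+\dots+a_i$, $A_0=0$. For nonnegative integers $p,q$, the $(\mathbf{a},p,q)$-staircase: rows $1,\dots,p$ contain columns $1,\dots,a+q$; for $1\le i\le n$ and $A_{i-1}<t\le A_i$, row $p+t$ contains columns $A_{i-1}+1,\dots,a+q$; then, for each $i$, the $a_i\times a_i$ square of rows $p+A_{i-1}+1,\dots,p+A_i$ and columns $A_{i-1}+1,\dots,A_i$ is merged into a single cell, the $i$th diagonal cell, regarded as lying in each of these rows and columns. The $(\mathbf{a},p,q)^-$-staircase is obtained by further removing the cells in rows $1,\dots,p$ and columns $a+1,\dots,a+q$. Taking pages = the $(\mathbf{a},r_i,s_i)$-staircases (resp. $(\mathbf{a},r_i,s_i)^-$-staircases), $1\le i\le m$, with the $j$th diagonal cells of all pages identified, an $(\mathbf{a},\mathbf{r},\mathbf{s})$-Selberg book (resp. $(\mathbf{a},\mathbf{r},\mathbf{s})^-$-Selberg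 book) is a filling of the resulting cells with $1,\dots,N$ (resp. $1,\dots,N^-$), each used once, such that every non-diagonal cell has entry larger than that of the diagonal cell in its row (if any) and smaller than that of the diagonal cell in its column (if any). $\mathrm{SB}(\mathbf{a},\mathbf{r},\mathbf{s})$, $\mathrm{SB}^-(\mathbf{a},\mathbf{r},\mathbf{s})$ denote these sets. *)

theory Defs
  imports Complex_Main
begin

text \<open>Conventions: a, r, s are lists; a = [a_1,...,a_n], r = [r_1,...,r_m], s = [s_1,...,s_m].
  Diagonal cells and pages are indexed from 0; rows and columns are numbered from 1.\<close>

definition Apart :: "nat list \<Rightarrow> nat \<Rightarrow> nat" where
  "Apart a i = sum_list (take i a)"

datatype cell = Diag nat | Off nat nat nat  (* Off k row col : non-diagonal cell on page k *)

text \<open>Raw cells of the (a,p,q)-staircase before merging diagonal squares.\<close>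
definition raw_cell :: "nat list \<Rightarrow> nat \<Rightarrow> nat \<Rightarrow> nat \<Rightarrow> nat \<Rightarrow> bool" where
  "raw_cell a p q row col \<longleftrightarrow>
     (1 \<le> row \<and> row \<le> p \<and> 1 \<le> col \<and> col \<le> sum_list a + q) \<or>
     (\<exists>i<length a. \<exists>t. Apart a i < t \<and> t \<le> Apart a (Suc i) \<and> row = p + t \<and>
        Apart a i + 1 \<le> col \<and> col \<le> sum_list a + q)"

definition in_diag_square :: "nat list \<Rightarrow> nat \<Rightarrow> nat \<Rightarrow> nat \<Rightarrow> nat \<Rightarrow> bool" where
  "in_diag_square a p i row col \<longleftrightarrow> i < length a \<and>
     p + Apart a i < row \<and> row \<le> p + Apart a (Suc i) \<and>
     Apart a i < col \<and> col \<le> Apart a (Suc i)"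

text \<open>Non-diagonal cells of the (a,p,q)-staircase (mn = False) or
  (a,p,q)^- staircase (mn = True).\<close>
definition off_cell :: "bool \<Rightarrow> nat list \<Rightarrow> nat \<Rightarrow> nat \<Rightarrow> nat \<Rightarrow> nat \<Rightarrow> bool" where
  "off_cell mn a p q row col \<longleftrightarrow>
     raw_cell a p q row col \<and> \<not> (\<exists>i. in_diag_square a p i row col) \<and>
     \<not> (mn \<and> 1 \<le> row \<and> row \<le> p \<and> sum_list a + 1 \<le> col \<and> col \<le> sum_list a + q)"

definition book_cells :: "bool \<Rightarrow> nat list \<Rightarrow> nat list \<Rightarrow> nat list \<Rightarrow> cell set" where
  "book_cells mn a r s =
     {Diag i | i. i < length a} \<union>
     {Off k row col | k row col. k < length r \<and> off_cell mn a (r ! k) (s ! k) row col}"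

definition diag_in_row :: "nat list \<Rightarrow> nat \<Rightarrow> nat \<Rightarrow> nat \<Rightarrow> bool" where
  "diag_in_row a p i row \<longleftrightarrow> i < length a \<and> p + Apart a i < row \<and> row \<le> p + Apart a (Suc i)"

definition diag_in_col :: "nat list \<Rightarrow> nat \<Rightarrow> nat \<Rightarrow> bool" where
  "diag_in_col a i col \<longleftrightarrow> i < length a \<and> Apart a i < col \<and> col \<le> Apart a (Suc i)"

definition selberg_N :: "nat list \<Rightarrow> nat list \<Rightarrow> nat list \<Rightarrow> nat" where
  "selberg_N a r s = length a + sum_list a * (sum_list r + sum_list s)
     + length r * (\<Sum>i<length a. \<Sum>j\<in>{i<..<length a}. a ! i * a ! j)
     + (\<Sum>k<length r. r ! k * s ! k)"

definition selberg_Nm :: "nat list \<Rightarrow> nat list \<Rightarrow> nat list \<Rightarrow> nat" where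
  "selberg_Nm a r s = length a + sum_list a * (sum_list r + sum_list s)
     + length r * (\<Sum>i<length a. \<Sum>j\<in>{i<..<length a}. a ! i * a ! j)"

definition SB_gen :: "bool \<Rightarrow> nat \<Rightarrow> nat list \<Rightarrow> nat list \<Rightarrow> nat list \<Rightarrow> (cell \<Rightarrow> nat) set" where
  "SB_gen mn NN a r s =
     {f. bij_betw f (book_cells mn a r s) {1..NN} \<and>
         (\<forall>x. x \<notin> book_cells mn a r s \<longrightarrow> f x = 0) \<and>
         (\<forall>k row col. Off k row col \<in> book_cells mn a r s \<longrightarrow>
            (\<forall>i. diag_in_row a (r ! k) i row \<longrightarrow> f (Diag i) < f (Off k row col)) \<and>
            (\<forall>i. diag_in_col a i col \<longrightarrow> f (Off k row col) < f (Diag i)))}"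

definition SB :: "nat list \<Rightarrow> nat list \<Rightarrow> nat list \<Rightarrow> (cell \<Rightarrow> nat) set" where
  "SB a r s = SB_gen False (selberg_N a r s) a r s"

definition SBm :: "nat list \<Rightarrow> nat list \<Rightarrow> nat list \<Rightarrow> (cell \<Rightarrow> nat) set" where
  "SBm a r s = SB_gen True (selberg_Nm a r s) a r s"

end

theory Submission
  imports Defs
begin

(* The minus book is obtained by deleting, on every page k, the r_k x s_k block of cells in
   rows 1..r_k and columns a+1..a+s_k. No diagonal cell shares a row (these rows lie above all
   diagonal squares) or a column (these columns lie to the right of them) with such a cell, so the
   deleted cells are unconstrained, and there are N - N^- of them. Adding an unconstrained element
   to a poset with n elements multiplies the number of its natural labellings by n + 1: give the
   new element any label v and raise every label >= v by one. *)

definition skip :: "nat \<Rightarrow> nat \<Rightarrow> nat" where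
  "skip v t = (if t < v then t else Suc t)"

definition unskip :: "nat \<Rightarrow> nat \<Rightarrow> nat" where
  "unskip v t = (if t < v then t else t - 1)"

lemma unskip_skip [simp]: "unskip v (skip v t) = t"
  by (simp add: skip_def unskip_def)

lemma skip_unskip: "t \<noteq> v \<Longrightarrow> skip v (unskip v t) = t"
  unfolding skip_def unskip_def by auto

lemma skip_less_skip_iff [simp]: "skip v s < skip v t \<longleftrightarrow> s < t"
  by (simp add: skip_def)

lemma unskip_less_unskip: "s < t \<Longrightarrow> s \<noteq> v \<Longrightarrow> t \<noteq> v \<Longrightarrow> unskip v s < unskip v t"
  unfolding unskip_def by auto

lemma bij_betw_skip:
  assumes "v \<in> {1..Suc n}"
  shows "bij_betw (skip v) {1..n} ({1..Suc n} - {v})"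
  by (rule bij_betw_byWitness[where f' = "unskip v"])
    (use assms in \<open>auto simp: skip_unskip skip_def unskip_def\<close>)

lemma bij_betw_unskip:
  assumes "v \<in> {1..Suc n}"
  shows "bij_betw (unskip v) ({1..Suc n} - {v}) {1..n}"
  by (rule bij_betw_byWitness[where f' = "skip v"])
    (use assms in \<open>auto simp: skip_unskip skip_def unskip_def\<close>)

definition natural_labellings :: "'c set \<Rightarrow> nat \<Rightarrow> ('c \<times> 'c) set \<Rightarrow> ('c \<Rightarrow> nat) set" where
  "natural_labellings X n R =
     {f. bij_betw f X {1..n} \<and> (\<forall>y. y \<notin> X \<longrightarrow> f y = 0) \<and> (\<forall>(c, d) \<in> R. f c < f d)}"

definition insert_label :: "'c \<Rightarrow> nat \<Rightarrow> ('c \<Rightarrow> nat) \<Rightarrow> 'c \<Rightarrow> nat" where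
  "insert_label x v g = (skip v \<circ> g)(x := v)"

definition remove_label :: "'c \<Rightarrow> ('c \<Rightarrow> nat) \<Rightarrow> 'c \<Rightarrow> nat" where
  "remove_label x f = (unskip (f x) \<circ> f)(x := 0)"

lemma insert_label_mem:
  assumes "x \<notin> X" "R \<subseteq> X \<times> X" "v \<in> {1..Suc n}" "g \<in> natural_labellings X n R"
  shows "insert_label x v g \<in> natural_labellings (insert x X) (Suc n) R"
proof -
  have bij: "bij_betw g X {1..n}" and zero: "\<And>y. y \<notin> X \<Longrightarrow> g y = 0"
    and mono: "\<And>c d. (c, d) \<in> R \<Longrightarrow> g c < g d"
    using assms(4) unfolding natural_labellings_def by auto
  have "bij_betw (skip v \<circ> g) X ({1..Suc n} - {v})"
    using bij_betw_trans[OF bij bij_betw_skip[OF assms(3)]] .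
  then have "bij_betw (insert_label x v g) X ({1..Suc n} - {v})"
    by (rule bij_betw_cong[THEN iffD1, rotated]) (use assms(1) in \<open>auto simp: insert_label_def\<close>)
  then have "bij_betw (insert_label x v g) (X \<union> {x}) (({1..Suc n} - {v}) \<union> {insert_label x v g x})"
    by (rule notIn_Un_bij_betw[OF assms(1), rotated]) (simp add: insert_label_def)
  moreover have "X \<union> {x} = insert x X" "({1..Suc n} - {v}) \<union> {insert_label x v g x} = {1..Suc n}"
    using assms(3) by (auto simp: insert_label_def)
  ultimately have "bij_betw (insert_label x v g) (insert x X) {1..Suc n}"
    by simp
  moreover have "insert_label x v g y = 0" if "y \<notin> insert x X" for y
    using that zero[of y] assms(3) by (simp add: insert_label_def skip_def)
  moreover have "insert_label x v g c < insert_label x v g d" if "(c, d) \<in> R" for c d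
    using that assms(1,2) mono[OF that] by (auto simp: insert_label_def)
  ultimately show ?thesis
    unfolding natural_labellings_def by auto
qed

lemma remove_label_mem:
  assumes "x \<notin> X" "R \<subseteq> X \<times> X" "f \<in> natural_labellings (insert x X) (Suc n) R"
  shows "f x \<in> {1..Suc n}" and "remove_label x f \<in> natural_labellings X n R"
proof -
  have bij: "bij_betw f (insert x X) {1..Suc n}" and zero: "\<And>y. y \<notin> insert x X \<Longrightarrow> f y = 0"
    and mono: "\<And>c d. (c, d) \<in> R \<Longrightarrow> f c < f d"
    using assms(3) unfolding natural_labellings_def by auto
  show fx: "f x \<in> {1..Suc n}"
    using bij_betwE[OF bij] by simp
  have "({1..Suc n} - {f x}) \<union> {f x} = {1..Suc n}" "X \<union> {x} = insert x X"
    using fx by auto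
  then have bij_X: "bij_betw f X ({1..Suc n} - {f x})"
    using notIn_Un_bij_betw3[OF assms(1), of f "{1..Suc n} - {f x}"] bij by simp
  then have "bij_betw (unskip (f x) \<circ> f) X {1..n}"
    using bij_betw_trans bij_betw_unskip[OF fx] by blast
  then have "bij_betw (remove_label x f) X {1..n}"
    by (rule bij_betw_cong[THEN iffD1, rotated]) (use assms(1) in \<open>auto simp: remove_label_def\<close>)
  moreover have "remove_label x f y = 0" if "y \<notin> X" for y
    using that zero[of y] by (simp add: remove_label_def unskip_def)
  moreover have "remove_label x f c < remove_label x f d" if "(c, d) \<in> R" for c d
  proof -
    have "c \<in> X" "d \<in> X"
      using that assms(2) by auto
    then have "f c \<noteq> f x" "f d \<noteq> f x" "c \<noteq> x" "d \<noteq> x"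
      using bij_betwE[OF bij_X] assms(1) by auto
    then show ?thesis
      using mono[OF that] by (simp add: remove_label_def unskip_less_unskip)
  qed
  ultimately show "remove_label x f \<in> natural_labellings X n R"
    unfolding natural_labellings_def by auto
qed

lemma card_natural_labellings_insert:
  assumes "x \<notin> X" "R \<subseteq> X \<times> X"
  shows "card (natural_labellings (insert x X) (Suc n) R) = Suc n * card (natural_labellings X n R)"
proof -
  have remove_insert: "remove_label x (insert_label x v g) = g"
    if "g \<in> natural_labellings X n R" for v g
  proof -
    have "g x = 0"
      using that assms(1) unfolding natural_labellings_def by auto
    then show ?thesis
      by (auto simp: insert_label_def remove_label_def)
  qed
  have insert_remove: "insert_label x (f x) (remove_label x f) = f"
    if f: "f \<in> natural_labellings (insert x X) (Suc n) R" for f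
  proof -
    have "f y \<noteq> f x" if "y \<noteq> x" for y
    proof (cases "y \<in> X")
      case True
      have "inj_on f (insert x X)"
        using f unfolding natural_labellings_def bij_betw_def by blast
      then show ?thesis
        using True that by (metis inj_onD insertI1 insertI2)
    next
      case False
      then show ?thesis
        using f that remove_label_mem(1)[OF assms f] unfolding natural_labellings_def by auto
    qed
    then show ?thesis
      by (auto simp: insert_label_def remove_label_def skip_unskip)
  qed
  have "bij_betw (\<lambda>(v, g). insert_label x v g) ({1..Suc n} \<times> natural_labellings X n R)
          (natural_labellings (insert x X) (Suc n) R)"
  proof (rule bij_betw_byWitness[where f' = "\<lambda>f. (f x, remove_label x f)"])
    show "\<forall>p \<in> {1..Suc n} \<times> natural_labellings X n R.
            (\<lambda>f. (f x, remove_label x f)) ((\<lambda>(v, g). insert_label x v g) p) = p"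
      using remove_insert by (auto simp: insert_label_def)
    show "\<forall>f \<in> natural_labellings (insert x X) (Suc n) R.
            (\<lambda>(v, g). insert_label x v g) ((\<lambda>f. (f x, remove_label x f)) f) = f"
      using insert_remove by auto
    show "(\<lambda>(v, g). insert_label x v g) ` ({1..Suc n} \<times> natural_labellings X n R)
            \<subseteq> natural_labellings (insert x X) (Suc n) R"
      using insert_label_mem[OF assms] by auto
    show "(\<lambda>f. (f x, remove_label x f)) ` natural_labellings (insert x X) (Suc n) R
            \<subseteq> {1..Suc n} \<times> natural_labellings X n R"
      using remove_label_mem[OF assms] by auto
  qed
  then show ?thesis
    by (metis bij_betw_same_card card_atLeastAtMost card_cartesian_product diff_Suc_1)
qed

lemma card_natural_labellings_Un:
  assumes "finite F" "F \<inter> X = {}" "R \<subseteq> X \<times> X"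
  shows "card (natural_labellings (X \<union> F) (n + card F) R) * fact n =
         card (natural_labellings X n R) * fact (n + card F)"
  using assms
proof (induction F rule: finite_induct)
  case empty
  then show ?case by simp
next
  case (insert y F)
  have "X \<union> insert y F = insert y (X \<union> F)" "y \<notin> X \<union> F" "R \<subseteq> (X \<union> F) \<times> (X \<union> F)"
    using insert.hyps insert.prems by auto
  then have "card (natural_labellings (X \<union> insert y F) (n + card (insert y F)) R) =
             Suc (n + card F) * card (natural_labellings (X \<union> F) (n + card F) R)"
    using card_natural_labellings_insert[of y "X \<union> F" R "n + card F"] insert.hyps by simp
  then show ?case
    using insert by (simp add: algebra_simps)
qed

definition book_order :: "bool \<Rightarrow> nat list \<Rightarrow> nat list \<Rightarrow> nat list \<Rightarrow> (cell \<times> cell) set" where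
  "book_order mn a r s =
     {(Diag i, Off k row col) | i k row col.
        Off k row col \<in> book_cells mn a r s \<and> diag_in_row a (r ! k) i row}
   \<union> {(Off k row col, Diag i) | i k row col.
        Off k row col \<in> book_cells mn a r s \<and> diag_in_col a i col}"

lemma SB_gen_eq_natural_labellings:
  "SB_gen mn N a r s = natural_labellings (book_cells mn a r s) N (book_order mn a r s)"
  unfolding SB_gen_def natural_labellings_def book_order_def by blast

lemma Apart_le_sum_list: "Apart a i \<le> sum_list a"
  unfolding Apart_def by (metis append_take_drop_id le_add1 sum_list_append)

lemma book_cells_True_subset_False: "book_cells True a r s \<subseteq> book_cells False a r s"
  unfolding book_cells_def off_cell_def by blast

lemma Off_in_book_cells_True_if_diag_in_row:
  assumes "Off k row col \<in> book_cells False a r s" "diag_in_row a (r ! k) i row"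
  shows "Off k row col \<in> book_cells True a r s"
  using assms unfolding book_cells_def off_cell_def diag_in_row_def by auto

lemma Off_in_book_cells_True_if_diag_in_col:
  assumes "Off k row col \<in> book_cells False a r s" "diag_in_col a i col"
  shows "Off k row col \<in> book_cells True a r s"
proof -
  have "col \<le> sum_list a"
    using assms(2) Apart_le_sum_list[of a "Suc i"] unfolding diag_in_col_def by auto
  then show ?thesis
    using assms(1) unfolding book_cells_def off_cell_def by auto
qed

lemma book_order_False_eq_True: "book_order False a r s = book_order True a r s"
proof
  show "book_order False a r s \<subseteq> book_order True a r s"
    unfolding book_order_def
    by (auto dest: Off_in_book_cells_True_if_diag_in_row Off_in_book_cells_True_if_diag_in_col)
  show "book_order True a r s \<subseteq> book_order False a r s"
    unfolding book_order_def using book_cells_True_subset_False by blast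
qed

lemma book_order_subset: "book_order True a r s \<subseteq> book_cells True a r s \<times> book_cells True a r s"
  unfolding book_order_def by (auto simp: book_cells_def diag_in_row_def diag_in_col_def)

definition corner_cells :: "nat list \<Rightarrow> nat list \<Rightarrow> nat list \<Rightarrow> cell set" where
  "corner_cells a r s = (\<lambda>(k, row, col). Off k row col) `
     (SIGMA k:{..<length r}. {1..r ! k} \<times> {sum_list a + 1..sum_list a + s ! k})"

lemma mem_corner_cells_iff:
  "x \<in> corner_cells a r s \<longleftrightarrow>
     (\<exists>k row col. x = Off k row col \<and> k < length r \<and> 1 \<le> row \<and> row \<le> r ! k \<and>
        sum_list a + 1 \<le> col \<and> col \<le> sum_list a + s ! k)"
  unfolding corner_cells_def by force

lemma finite_corner_cells: "finite (corner_cells a r s)"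
  unfolding corner_cells_def by auto

lemma card_corner_cells: "card (corner_cells a r s) = (\<Sum>k<length r. r ! k * s ! k)"
proof -
  have "inj_on (\<lambda>(k, row, col). Off k row col)
          (SIGMA k:{..<length r}. {1..r ! k} \<times> {sum_list a + 1..sum_list a + s ! k})"
    by (auto simp: inj_on_def)
  then have "card (corner_cells a r s) =
      card (SIGMA k:{..<length r}. {1..r ! k} \<times> {sum_list a + 1..sum_list a + s ! k})"
    unfolding corner_cells_def by (rule card_image)
  also have "\<dots> = (\<Sum>k<length r. card ({1..r ! k} \<times> {sum_list a + 1..sum_list a + s ! k}))"
    by (rule card_SigmaI) auto
  finally show ?thesis
    by (simp add: card_cartesian_product)
qed

lemma corner_cells_disjoint: "corner_cells a r s \<inter> book_cells True a r s = {}"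
  unfolding book_cells_def corner_cells_def off_cell_def by auto

lemma book_cells_False_eq: "book_cells False a r s = book_cells True a r s \<union> corner_cells a r s"
proof -
  have "off_cell False a (r ! k) (s ! k) row col"
    if "1 \<le> row" "row \<le> r ! k" "sum_list a + 1 \<le> col" "col \<le> sum_list a + s ! k" for k row col
    using that unfolding off_cell_def raw_cell_def in_diag_square_def by auto
  then show ?thesis
    unfolding book_cells_def off_cell_def by (auto simp: mem_corner_cells_iff)
qed

lemma selberg_N_eq: "selberg_N a r s = selberg_Nm a r s + card (corner_cells a r s)"
  unfolding selberg_N_def selberg_Nm_def card_corner_cells by simp

theorem proposition5p2:
  fixes a r s :: "nat list"
  assumes "\<forall>x \<in> set a. 0 < x"
    and "length r \<ge> 1"
    and "length s = length r"
  shows "real (card (SB a r s)) =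
         real (card (SBm a r s)) * fact (selberg_N a r s) / fact (selberg_Nm a r s)"
proof -
  have "card (SB a r s) * fact (selberg_Nm a r s) = card (SBm a r s) * fact (selberg_N a r s)"
    unfolding SB_def SBm_def SB_gen_eq_natural_labellings
      book_cells_False_eq book_order_False_eq_True selberg_N_eq
    by (rule card_natural_labellings_Un[OF finite_corner_cells corner_cells_disjoint book_order_subset])
  then have "real (card (SB a r s)) * fact (selberg_Nm a r s) =
             real (card (SBm a r s)) * fact (selberg_N a r s)"
    by (metis of_nat_fact of_nat_mult)
  then show ?thesis
    by (simp add: field_simps)
qed

end
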